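(* Let $(N_1,m_1)$ and $(N_2,m_2)$ be labeled marked Petri nets and $E$ a system of linear constraints with $(N_1,m_1)\vartriangleright_E(N_2,m_2)$, and let $(M,m)$ be a labeled marked Petri net that is compatible with respect to this equivalence. Then $(N_1,m_1)\,\|\,(M,m)\vartriangleright_E(N_2,m_2)\,\|\,(M,m)$.
   Context: A Petri net $N=(P,T,\mathrm{Pre},\mathrm{Post})$ has a finite set of places $P$, a finite set of transitions $T$ disjoint from $P$, and flow functions $\mathrm{Pre},\mathrm{Post}:T\to(P\to\mathbb N)$. A marking is a map $m:P\to\mathbb N$. Transition $t$ is enabled at $m$ if $m(p)\ge\mathrm{Pre}(t,p)$ for all $p$; firing it yields $m'=m-\mathrm{Pre}(t)+\mathrm{Post}(t)$. A firing sequence $\varrho$ leads from $m$ to $m'$ ($m\overset{\varrho}{\Rightarrow}m'$) if its transitions can be fired successively from $m$ reaching $m'$. A labeled net has a labeling $l:T\to\Sigma\cup\{\tau\}$ ($\tau\notin\Sigma$ silent), extended to sequences by $l(\epsilon)=\epsilon$, $\tau$ mapped to $\epsilon$, $l(\varrho t)=l(\varrho)l(t)$. Formulas are Boolean combinations of linear (in)equalities over integer variables; place names are used as variables. For a marking $m$ over $P$, $\underline m\triangleq\bigwedge_{p\in P}(p=m(p))$; $m\models\phi$ means $\phi\wedge\underline m$ is satisfiable over the integers. Markings $m_1$ over $P_1$, $m_2$ over $P_2$ are compatible if they agree on $P_1\cap P_2$; then $m_1\uplus m_2$ is the marking on $P_1\cup P_2$ agreeing with both; $m_1\uplus m_2\models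 E$ presupposes compatibility. $E$-abstraction (for $N_1,N_2$ with labelings $l_1,l_2$ over the same alphabet): $(N_1,m_1)\sqsupseteq_E(N_2,m_2)$ iff (A1) $m_1\uplus m_2\models E$; and (A2) for every firing sequence $m_1\overset{\varrho_1}{\Rightarrow}m_1'$ in $N_1$ there is at least one marking $m_2'$ over $P_2$ with $m_1'\uplus m_2'\models E$, and for every marking $m_2'$ over $P_2$ with $m_1'\uplus m_2'\models E$ there is a firing sequence $\varrho_2$ of $N_2$ with $m_2\overset{\varrho_2}{\Rightarrow}m_2'$ and $l_1(\varrho_1)=l_2(\varrho_2)$. $(N_1,m_1)\vartriangleright_E(N_2,m_2)$ means both directions hold. The fresh variables of $(N_1,m_1)\vartriangleright_E(N_2,m_2)$ are the variables in $E$ not in $P_1\cup P_2$. A net $M$ with places $P_M$ is compatible with respect to this statement when $(P_1\cup P_2)\cap P_M=\emptyset$ and no fresh variable of the statement is a place of $M$. Synchronous product: for labeled nets $N_a=(P_a,T_a,\mathrm{Pre}_a,\mathrm{Post}_a)$ with labeling $l_a$ over alphabet $\Sigma_a$ and $N_b$ likewise with $l_b$ over $\Sigma_b$, with $P_a\cap P_b=\emptyset$, $N_a\|N_b$ has places $P_a\cup P_b$ and transitions: $(t,\circ)$ for $t\in T_a$ with $l_a(t)\notin\Sigma_b$, labeled $l_a(t)$; $(\circ,t)$ for $t\in T_b$ with $l_b(t)\notin\Sigma_a$, labeled $l_b(t)$; and $(t_a,t_b)$ whenever $l_a(t_a)=l_b(t_b)$, labeled $l_a(t_a)$. $\mathrm{Pre}((t_a,t_b),p)=\mathrm{Pre}_a(t_a,p)$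 if $p\in P_a$ and $t_a\ne\circ$, $=\mathrm{Pre}_b(t_b,p)$ if $p\in P_b$ and $t_b\ne\circ$, and $0$ otherwise; similarly for $\mathrm{Post}$. For marked nets, $(N_a,m_a)\|(N_b,m_b)\triangleq(N_a\|N_b,m_a\|m_b)$ where $m_a\|m_b$ is the union marking on $P_a\cup P_b$. *)

theory Defs
  imports Main
begin

datatype 'v lterm = LConst int | LVar 'v | LAdd "'v lterm" "'v lterm" | LMul int "'v lterm"

datatype 'v formula =
    FTrue
  | FEq "'v lterm" "'v lterm"
  | FLe "'v lterm" "'v lterm"
  | FNot "'v formula"
  | FAnd "'v formula" "'v formula"
  | FOr "'v formula" "'v formula"

primrec lval :: "'v lterm \<Rightarrow> ('v \<Rightarrow> int) \<Rightarrow> int" where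
  "lval (LConst c) v = c"
| "lval (LVar x) v = v x"
| "lval (LAdd a b) v = lval a v + lval b v"
| "lval (LMul c a) v = c * lval a v"

primrec holds :: "'v formula \<Rightarrow> ('v \<Rightarrow> int) \<Rightarrow> bool" where
  "holds FTrue v = True"
| "holds (FEq a b) v = (lval a v = lval b v)"
| "holds (FLe a b) v = (lval a v \<le> lval b v)"
| "holds (FNot f) v = (\<not> holds f v)"
| "holds (FAnd f g) v = (holds f v \<and> holds g v)"
| "holds (FOr f g) v = (holds f v \<or> holds g v)"

primrec lvars :: "'v lterm \<Rightarrow> 'v set" where
  "lvars (LConst c) = {}"
| "lvars (LVar x) = {x}"
| "lvars (LAdd a b) = lvars a \<union> lvars b"
| "lvars (LMul c a) = lvars a"

primrec fvars :: "'v formula \<Rightarrow> 'v set" where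
  "fvars FTrue = {}"
| "fvars (FEq a b) = lvars a \<union> lvars b"
| "fvars (FLe a b) = lvars a \<union> lvars b"
| "fvars (FNot f) = fvars f"
| "fvars (FAnd f g) = fvars f \<union> fvars g"
| "fvars (FOr f g) = fvars f \<union> fvars g"

text \<open>Place names are the variables of type 'v. Labels: None is the silent label tau.\<close>

record ('v, 't, 'a) pnet =
  places :: "'v set"
  trans  :: "'t set"
  pre    :: "'t \<Rightarrow> 'v \<Rightarrow> nat"
  post   :: "'t \<Rightarrow> 'v \<Rightarrow> nat"
  lab    :: "'t \<Rightarrow> 'a option"
  alph   :: "'a set"

definition wf_net :: "('v, 't, 'a) pnet \<Rightarrow> bool" where
  "wf_net N \<longleftrightarrow> finite (places N) \<and> finite (trans N)
     \<and> (\<forall>t p. p \<notin> places N \<longrightarrow> pre N t p = 0 \<and> post N t p = 0)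
     \<and> (\<forall>t \<in> trans N. case lab N t of None \<Rightarrow> True | Some a \<Rightarrow> a \<in> alph N)"

definition marking_on :: "'v set \<Rightarrow> ('v \<Rightarrow> nat) \<Rightarrow> bool" where
  "marking_on P m \<longleftrightarrow> (\<forall>x. x \<notin> P \<longrightarrow> m x = 0)"

definition enabled :: "('v, 't, 'a) pnet \<Rightarrow> ('v \<Rightarrow> nat) \<Rightarrow> 't \<Rightarrow> bool" where
  "enabled N m t \<longleftrightarrow> t \<in> trans N \<and> (\<forall>p \<in> places N. pre N t p \<le> m p)"

definition fire :: "('v, 't, 'a) pnet \<Rightarrow> ('v \<Rightarrow> nat) \<Rightarrow> 't \<Rightarrow> ('v \<Rightarrow> nat)" where
  "fire N m t = (\<lambda>p. m p - pre N t p + post N t p)"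

fun fires :: "('v, 't, 'a) pnet \<Rightarrow> ('v \<Rightarrow> nat) \<Rightarrow> 't list \<Rightarrow> ('v \<Rightarrow> nat) \<Rightarrow> bool" where
  "fires N m [] m' \<longleftrightarrow> m' = m"
| "fires N m (t # ts) m' \<longleftrightarrow> enabled N m t \<and> fires N (fire N m t) ts m'"

definition word :: "('v, 't, 'a) pnet \<Rightarrow> 't list \<Rightarrow> 'a list" where
  "word N ts = concat (map (\<lambda>t. case lab N t of None \<Rightarrow> [] | Some a \<Rightarrow> [a]) ts)"

definition msat :: "'v set \<Rightarrow> ('v \<Rightarrow> nat) \<Rightarrow> 'v formula \<Rightarrow> bool" where
  "msat P m \<phi> \<longleftrightarrow> (\<exists>v. (\<forall>x \<in> P. v x = int (m x)) \<and> holds \<phi> v)"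

definition compatible :: "'v set \<Rightarrow> ('v \<Rightarrow> nat) \<Rightarrow> 'v set \<Rightarrow> ('v \<Rightarrow> nat) \<Rightarrow> bool" where
  "compatible P1 m1 P2 m2 \<longleftrightarrow> (\<forall>x \<in> P1 \<inter> P2. m1 x = m2 x)"

definition munion :: "'v set \<Rightarrow> ('v \<Rightarrow> nat) \<Rightarrow> ('v \<Rightarrow> nat) \<Rightarrow> ('v \<Rightarrow> nat)" where
  "munion P1 m1 m2 = (\<lambda>x. if x \<in> P1 then m1 x else m2 x)"

definition usat :: "'v set \<Rightarrow> ('v \<Rightarrow> nat) \<Rightarrow> 'v set \<Rightarrow> ('v \<Rightarrow> nat) \<Rightarrow> 'v formula \<Rightarrow> bool" where
  "usat P1 m1 P2 m2 E \<longleftrightarrow> compatible P1 m1 P2 m2 \<and> msat (P1 \<union> P2) (munion P1 m1 m2) E"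

definition abstraction ::
  "('v, 't1, 'a) pnet \<Rightarrow> ('v \<Rightarrow> nat) \<Rightarrow> 'v formula \<Rightarrow> ('v, 't2, 'a) pnet \<Rightarrow> ('v \<Rightarrow> nat) \<Rightarrow> bool" where
  "abstraction N1 m1 E N2 m2 \<longleftrightarrow>
     usat (places N1) m1 (places N2) m2 E \<and>
     (\<forall>\<rho>1 m1'. fires N1 m1 \<rho>1 m1' \<longrightarrow>
        (\<exists>m2'. marking_on (places N2) m2' \<and> usat (places N1) m1' (places N2) m2' E) \<and>
        (\<forall>m2'. marking_on (places N2) m2' \<and> usat (places N1) m1' (places N2) m2' E \<longrightarrow>
           (\<exists>\<rho>2. fires N2 m2 \<rho>2 m2' \<and> word N1 \<rho>1 = word N2 \<rho>2)))"

definition equivalence ::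
  "('v, 't1, 'a) pnet \<Rightarrow> ('v \<Rightarrow> nat) \<Rightarrow> 'v formula \<Rightarrow> ('v, 't2, 'a) pnet \<Rightarrow> ('v \<Rightarrow> nat) \<Rightarrow> bool" where
  "equivalence N1 m1 E N2 m2 \<longleftrightarrow> abstraction N1 m1 E N2 m2 \<and> abstraction N2 m2 E N1 m1"

definition fresh_vars :: "('v, 't1, 'a) pnet \<Rightarrow> ('v, 't2, 'a) pnet \<Rightarrow> 'v formula \<Rightarrow> 'v set" where
  "fresh_vars N1 N2 E = fvars E - (places N1 \<union> places N2)"

definition compatible_net ::
  "('v, 't1, 'a) pnet \<Rightarrow> ('v, 't2, 'a) pnet \<Rightarrow> 'v formula \<Rightarrow> ('v, 't3, 'a) pnet \<Rightarrow> bool" where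
  "compatible_net N1 N2 E M \<longleftrightarrow>
     (places N1 \<union> places N2) \<inter> places M = {} \<and> fresh_vars N1 N2 E \<inter> places M = {}"

text \<open>Transitions of the product are pairs; None plays the role of the idle component.\<close>

definition sync :: "('v, 'ta, 'a) pnet \<Rightarrow> ('v, 'tb, 'a) pnet \<Rightarrow> ('v, 'ta option \<times> 'tb option, 'a) pnet" where
  "sync Na Nb = \<lparr>
     places = places Na \<union> places Nb,
     trans = {(Some t, None) | t. t \<in> trans Na \<and> (case lab Na t of None \<Rightarrow> True | Some a \<Rightarrow> a \<notin> alph Nb)}
           \<union> {(None, Some u) | u. u \<in> trans Nb \<and> (case lab Nb u of None \<Rightarrow> True | Some a \<Rightarrow> a \<notin> alph Na)}
           \<union> {(Some t, Some u) | t u. t \<in> trans Na \<and> u \<in> trans Nb \<and> lab Na t = lab Nb u \<and> lab Na t \<noteq> None},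
     pre = (\<lambda>(x, y) p. if p \<in> places Na then (case x of Some t \<Rightarrow> pre Na t p | None \<Rightarrow> 0)
                       else if p \<in> places Nb then (case y of Some u \<Rightarrow> pre Nb u p | None \<Rightarrow> 0) else 0),
     post = (\<lambda>(x, y) p. if p \<in> places Na then (case x of Some t \<Rightarrow> post Na t p | None \<Rightarrow> 0)
                       else if p \<in> places Nb then (case y of Some u \<Rightarrow> post Nb u p | None \<Rightarrow> 0) else 0),
     lab = (\<lambda>(x, y). case x of Some t \<Rightarrow> lab Na t | None \<Rightarrow> (case y of Some u \<Rightarrow> lab Nb u | None \<Rightarrow> None)),
     alph = alph Na \<union> alph Nb \<rparr>"

definition msync :: "('v, 'ta, 'a) pnet \<Rightarrow> ('v \<Rightarrow> nat) \<Rightarrow> ('v \<Rightarrow> nat) \<Rightarrow> ('v \<Rightarrow> nat)" where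
  "msync Na ma mb = munion (places Na) ma mb"

end

theory Submission
  imports Defs
begin

(* A run of a synchronous product is exactly an interleaving of runs of its components that
   agree on the synchronised labels, and it ends in the union of their final markings.
   So a run of N1 || M splits into a run of N1 and a run of M.  The E-abstraction of N1 by N2
   answers the N1-part with an N2-run carrying the same observable word; since N1 and N2 have the
   same alphabet, that run synchronises with the unchanged M-part exactly as the N1-part did, and
   reassembles into a run of N2 || M.  As E mentions no place of M, the M-component of a marking
   passes through the constraints unchanged. *)

lemma lval_cong: "(\<And>x. x \<in> lvars a \<Longrightarrow> v x = v' x) \<Longrightarrow> lval a v = lval a v'"
  by (induction a) auto

lemma holds_cong: "(\<And>x. x \<in> fvars f \<Longrightarrow> v x = v' x) \<Longrightarrow> holds f v = holds f v'"
  by (induction f) (simp_all add: lval_cong[where v = v and v' = v'])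

lemma msat_cong: "\<forall>x \<in> P. m x = m' x \<Longrightarrow> msat P m \<phi> \<longleftrightarrow> msat P m' \<phi>"
  unfolding msat_def by auto

lemma usat_cong:
  assumes "\<forall>x \<in> P1. a x = a' x" and "\<forall>x \<in> P2. b x = b' x"
  shows "usat P1 a P2 b E \<longleftrightarrow> usat P1 a' P2 b' E"
proof -
  have "\<forall>x \<in> P1 \<union> P2. munion P1 a b x = munion P1 a' b' x"
    using assms unfolding munion_def by auto
  then have "msat (P1 \<union> P2) (munion P1 a b) E \<longleftrightarrow> msat (P1 \<union> P2) (munion P1 a' b') E"
    by (rule msat_cong)
  with assms show ?thesis
    unfolding usat_def compatible_def by auto
qed

lemma usat_restrict:
  assumes "usat (P1 \<union> Q) a (P2 \<union> Q) b E"
  shows "usat P1 a P2 b E"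
proof -
  from assms obtain v where compat: "compatible (P1 \<union> Q) a (P2 \<union> Q) b"
    and v: "\<forall>x \<in> P1 \<union> Q \<union> (P2 \<union> Q). v x = int (munion (P1 \<union> Q) a b x)" and E: "holds E v"
    unfolding usat_def msat_def by blast
  have "\<forall>x \<in> P1 \<union> P2. v x = int (munion P1 a b x)"
    using v compat unfolding munion_def compatible_def by auto
  with compat E show ?thesis
    unfolding usat_def msat_def compatible_def by auto
qed

lemma usat_munion_extend:
  assumes "usat P1 a P2 b E"
    and "P1 \<inter> Q = {}" and "P2 \<inter> Q = {}" and "fvars E \<inter> Q = {}"
  shows "usat (P1 \<union> Q) (munion P1 a c) (P2 \<union> Q) (munion P2 b c) E"
proof -
  from assms(1) obtain v where compat: "compatible P1 a P2 b"
    and v: "\<forall>x \<in> P1 \<union> P2. v x = int (munion P1 a b x)" and E: "holds E v"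
    unfolding usat_def msat_def by blast
  define v' where "v' x = (if x \<in> Q then int (c x) else v x)" for x
  have "\<forall>x \<in> fvars E. v x = v' x"
    using assms(4) unfolding v'_def by auto
  with E have "holds E v'"
    using holds_cong[of E v v'] by blast
  moreover have "\<forall>x \<in> P1 \<union> Q \<union> (P2 \<union> Q). v' x = int (munion (P1 \<union> Q) (munion P1 a c) (munion P2 b c) x)"
    using v assms(2,3) unfolding v'_def munion_def by auto
  moreover have "compatible (P1 \<union> Q) (munion P1 a c) (P2 \<union> Q) (munion P2 b c)"
    using compat assms(2,3) unfolding compatible_def munion_def by auto
  ultimately show ?thesis
    unfolding usat_def msat_def by blast
qed

lemma marking_on_munion: "marking_on P a \<Longrightarrow> marking_on Q b \<Longrightarrow> marking_on (P \<union> Q) (munion P a b)"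
  unfolding marking_on_def munion_def by auto

lemma munion_restrict_eq:
  assumes "marking_on (P \<union> Q) m" and "marking_on Q mQ" and "\<forall>x \<in> Q. mQ x = m x"
  shows "munion P (\<lambda>x. if x \<in> P then m x else 0) mQ = m"
proof
  fix x
  show "munion P (\<lambda>x. if x \<in> P then m x else 0) mQ x = m x"
    using assms unfolding munion_def marking_on_def by (cases "x \<in> Q") auto
qed

lemma usat_munion_splitE:
  assumes sat: "usat (P1 \<union> Q) (munion P1 a c) (P2 \<union> Q) m E"
    and m: "marking_on (P2 \<union> Q) m" and c: "marking_on Q c" and disj: "P1 \<inter> Q = {}"
  obtains b where "marking_on P2 b" and "usat P1 a P2 b E" and "m = munion P2 b c"
proof -
  define b where "b x = (if x \<in> P2 then m x else 0)" for x
  have "marking_on P2 b"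
    unfolding b_def marking_on_def by simp
  moreover have "usat P1 a P2 b E"
    using usat_restrict[OF sat] usat_cong[of P1 "munion P1 a c" a P2 m b]
    unfolding b_def munion_def by auto
  moreover have "\<forall>x \<in> Q. munion P1 a c x = m x"
    using sat unfolding usat_def compatible_def by auto
  with disj have "\<forall>x \<in> Q. c x = m x"
    unfolding munion_def by (metis disjoint_iff)
  then have "m = munion P2 b c"
    using munion_restrict_eq[OF m c] unfolding b_def by simp
  ultimately show thesis
    using that by blast
qed

lemma fires_append:
  "fires N m (xs @ ys) m' \<longleftrightarrow> (\<exists>m''. fires N m xs m'' \<and> fires N m'' ys m')"
  by (induction xs arbitrary: m) auto

lemma fires_trans: "fires N m \<rho> m' \<Longrightarrow> set \<rho> \<subseteq> trans N"
  by (induction \<rho> arbitrary: m) (auto simp: enabled_def)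

lemma fires_marking_on:
  assumes "wf_net N" and "marking_on (places N) m" and "fires N m \<rho> m'"
  shows "marking_on (places N) m'"
  using assms(2,3)
proof (induction \<rho> arbitrary: m)
  case (Cons t \<rho>)
  have "marking_on (places N) (fire N m t)"
    using Cons.prems(1) assms(1) unfolding marking_on_def fire_def wf_net_def by auto
  with Cons show ?case by auto
qed simp

lemma places_sync [simp]: "places (sync Na Nb) = places Na \<union> places Nb"
  by (simp add: sync_def)

lemma lab_sync [simp]:
  "lab (sync Na Nb) (x, y) = (case x of Some t \<Rightarrow> lab Na t | None \<Rightarrow> Option.bind y (lab Nb))"
  by (simp add: sync_def split: option.split)

lemma fire_sync:
  assumes "wf_net Nb"
  shows "fire (sync Na Nb) (munion (places Na) ma mb) (x, y) =
    munion (places Na) (case_option ma (fire Na ma) x) (case_option mb (fire Nb mb) y)"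
  using assms unfolding fire_def sync_def munion_def wf_net_def
  by (auto split: option.splits)

lemma enabled_sync:
  assumes "places Na \<inter> places Nb = {}" and "(x, y) \<in> trans (sync Na Nb)"
  shows "enabled (sync Na Nb) (munion (places Na) ma mb) (x, y) \<longleftrightarrow>
    case_option True (enabled Na ma) x \<and> case_option True (enabled Nb mb) y"
  using assms unfolding enabled_def munion_def sync_def
  by (auto split: option.splits)

lemma fires_sync_single:
  assumes "wf_net Nb" and "places Na \<inter> places Nb = {}" and "z \<in> trans (sync Na Nb)"
  shows "fires (sync Na Nb) (munion (places Na) ma mb) [z] m' \<longleftrightarrow>
    (\<exists>ma' mb'. fires Na ma (List.map_filter fst [z]) ma' \<and> fires Nb mb (List.map_filter snd [z]) mb'
       \<and> m' = munion (places Na) ma' mb')"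
proof -
  obtain x y where z: "z = (x, y)" by force
  show ?thesis
    using assms(3) unfolding z
    by (cases x; cases y) (auto simp: enabled_sync[OF assms(2)] fire_sync[OF assms(1)])
qed

lemma map_filter_append: "List.map_filter f (xs @ ys) = List.map_filter f xs @ List.map_filter f ys"
  by (simp add: List.map_filter_def)

lemma fires_sync_iff:
  assumes "wf_net Nb" and "places Na \<inter> places Nb = {}" and "set \<rho> \<subseteq> trans (sync Na Nb)"
  shows "fires (sync Na Nb) (munion (places Na) ma mb) \<rho> m' \<longleftrightarrow>
    (\<exists>ma' mb'. fires Na ma (List.map_filter fst \<rho>) ma' \<and> fires Nb mb (List.map_filter snd \<rho>) mb'
       \<and> m' = munion (places Na) ma' mb')"
  using assms(3)
proof (induction \<rho> arbitrary: ma mb)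
  case (Cons z \<rho>)
  let ?S = "sync Na Nb" and ?Pa = "places Na"
  have "fires ?S (munion ?Pa ma mb) (z # \<rho>) m' \<longleftrightarrow>
      (\<exists>k. fires ?S (munion ?Pa ma mb) [z] k \<and> fires ?S k \<rho> m')"
    using fires_append[of ?S _ "[z]" \<rho>] by simp
  also have "\<dots> \<longleftrightarrow> (\<exists>ma1 mb1. fires Na ma (List.map_filter fst [z]) ma1
      \<and> fires Nb mb (List.map_filter snd [z]) mb1 \<and> fires ?S (munion ?Pa ma1 mb1) \<rho> m')"
    using fires_sync_single[OF assms(1,2)] Cons.prems by auto
  also have "\<dots> \<longleftrightarrow> (\<exists>ma1 mb1 ma' mb'. fires Na ma (List.map_filter fst [z]) ma1
      \<and> fires Nb mb (List.map_filter snd [z]) mb1 \<and> fires Na ma1 (List.map_filter fst \<rho>) ma'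
      \<and> fires Nb mb1 (List.map_filter snd \<rho>) mb' \<and> m' = munion ?Pa ma' mb')"
    using Cons by auto
  also have "\<dots> \<longleftrightarrow> (\<exists>ma' mb'. fires Na ma (List.map_filter fst ([z] @ \<rho>)) ma'
      \<and> fires Nb mb (List.map_filter snd ([z] @ \<rho>)) mb' \<and> m' = munion ?Pa ma' mb')"
    unfolding map_filter_append fires_append by blast
  finally show ?case by simp
qed simp

lemma word_Nil [simp]: "word N [] = []"
  by (simp add: word_def)

lemma word_Cons [simp]: "word N (t # \<rho>) = (case lab N t of None \<Rightarrow> word N \<rho> | Some a \<Rightarrow> a # word N \<rho>)"
  by (simp add: word_def split: option.split)

lemma word_append [simp]: "word N (xs @ ys) = word N xs @ word N ys"
  by (simp add: word_def)

lemma word_eq_Nil_iff: "word N \<rho> = [] \<longleftrightarrow> (\<forall>t \<in> set \<rho>. lab N t = None)"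
  by (induction \<rho>) (auto split: option.split)

lemma word_eq_ConsE:
  assumes "word N \<rho> = a # w"
  obtains s u \<rho>' where "\<rho> = s @ u # \<rho>'" and "word N s = []" and "lab N u = Some a" and "word N \<rho>' = w"
  using assms
proof (induction \<rho> arbitrary: thesis)
  case (Cons t \<rho>)
  show ?case
  proof (cases "lab N t")
    case None
    with Cons.prems(2) have "word N \<rho> = a # w" by simp
    then obtain s u \<rho>' where "\<rho> = s @ u # \<rho>'" "word N s = []" "lab N u = Some a" "word N \<rho>' = w"
      using Cons.IH by blast
    with None show ?thesis
      using Cons.prems(1)[of "t # s" u \<rho>'] by simp
  next
    case (Some b)
    with Cons.prems(2) show ?thesis
      using Cons.prems(1)[of "[]" t \<rho>] by simp
  qed
qed simp

lemma map_filter_map_left [simp]: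
  "List.map_filter fst (map (\<lambda>u. (Some u, None)) s) = s"
  "List.map_filter snd (map (\<lambda>u. (Some u, None :: 'b option)) s) = []"
  by (induction s) auto

lemma sync_trans_left_silent:
  assumes "word N s = []" and "set s \<subseteq> trans N"
  shows "set (map (\<lambda>u. (Some u, None)) s) \<subseteq> trans (sync N M)"
    and "word (sync N M) (map (\<lambda>u. (Some u, None)) s) = []"
  using assms by (auto simp: sync_def word_eq_Nil_iff)

lemma sync_trans_left_None:
  "alph N1 = alph N2 \<Longrightarrow> (None, y) \<in> trans (sync N1 M) \<Longrightarrow> (None, y) \<in> trans (sync N2 M)"
  by (auto simp: sync_def split: option.splits)

lemma sync_trans_left_Some:
  "(Some t, y) \<in> trans (sync N1 M) \<Longrightarrow> u \<in> trans N2 \<Longrightarrow> lab N2 u = lab N1 t \<Longrightarrow>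
    (Some u, y) \<in> trans (sync N2 M)"
  by (auto simp: sync_def)


lemma sync_run_transfer_left:
  assumes "alph N1 = alph N2"
  shows "set \<rho> \<subseteq> trans (sync N1 M) \<Longrightarrow> set \<rho>2 \<subseteq> trans N2 \<Longrightarrow>
    word N2 \<rho>2 = word N1 (List.map_filter fst \<rho>) \<Longrightarrow>
    \<exists>\<rho>'. set \<rho>' \<subseteq> trans (sync N2 M) \<and> List.map_filter fst \<rho>' = \<rho>2
      \<and> List.map_filter snd \<rho>' = List.map_filter snd \<rho> \<and> word (sync N2 M) \<rho>' = word (sync N1 M) \<rho>"
proof (induction \<rho> arbitrary: \<rho>2)
  case Nil
  then show ?case
    using sync_trans_left_silent[of N2 \<rho>2 M] by (intro exI[of _ "map (\<lambda>u. (Some u, None)) \<rho>2"]) auto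
next
  case (Cons z \<rho>)
  obtain x y where z: "z = (x, y)" by force
  from Cons.prems(1) z have xy: "(x, y) \<in> trans (sync N1 M)" and \<rho>: "set \<rho> \<subseteq> trans (sync N1 M)"
    by auto
  consider "x = None" | t where "x = Some t" "lab N1 t = None" | t a where "x = Some t" "lab N1 t = Some a"
    by (cases x) auto
  then show ?case
  proof cases
    case 1
    obtain \<rho>' where IH: "set \<rho>' \<subseteq> trans (sync N2 M)" "List.map_filter fst \<rho>' = \<rho>2"
        "List.map_filter snd \<rho>' = List.map_filter snd \<rho>" "word (sync N2 M) \<rho>' = word (sync N1 M) \<rho>"
      using Cons.IH[OF \<rho> Cons.prems(2)] Cons.prems(3) z 1 by auto
    have "(None, y) \<in> trans (sync N2 M)"
      using sync_trans_left_None[OF assms] xy 1 by simp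
    with IH z 1 show ?thesis
      by (intro exI[of _ "(None, y) # \<rho>'"]) (simp split: option.split)
  next
    case 2
    then have "y = None"
      using xy by (auto simp: sync_def)
    with Cons.IH[OF \<rho> Cons.prems(2)] Cons.prems(3) z 2 show ?thesis
      by auto
  next
    case 3
    with Cons.prems(3) z have "word N2 \<rho>2 = a # word N1 (List.map_filter fst \<rho>)"
      by simp
    then obtain s u \<rho>2' where \<rho>2: "\<rho>2 = s @ u # \<rho>2'" and s: "word N2 s = []"
      and u: "lab N2 u = Some a" and \<rho>2': "word N2 \<rho>2' = word N1 (List.map_filter fst \<rho>)"
      by (rule word_eq_ConsE)
    have trans2: "set s \<subseteq> trans N2" "u \<in> trans N2" "set \<rho>2' \<subseteq> trans N2"
      using Cons.prems(2) \<rho>2 by auto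
    obtain \<rho>' where IH: "set \<rho>' \<subseteq> trans (sync N2 M)" "List.map_filter fst \<rho>' = \<rho>2'"
        "List.map_filter snd \<rho>' = List.map_filter snd \<rho>" "word (sync N2 M) \<rho>' = word (sync N1 M) \<rho>"
      using Cons.IH[OF \<rho> trans2(3) \<rho>2'] by blast
    have "(Some u, y) \<in> trans (sync N2 M)"
      using sync_trans_left_Some[of t y N1 M u N2] xy trans2(2) u 3 by simp
    with IH z 3 \<rho>2 u sync_trans_left_silent[OF s trans2(1)] show ?thesis
      by (intro exI[of _ "map (\<lambda>u. (Some u, None)) s @ (Some u, y) # \<rho>'"])
        (auto simp: map_filter_append split: option.split)
  qed
qed

lemma fires_sync_replace_left:
  assumes "wf_net M" and "alph Na = alph Nb" and "places Nb \<inter> places M = {}"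
    and "set \<rho> \<subseteq> trans (sync Na M)" and "fires M m (List.map_filter snd \<rho>) mM'"
    and "fires Nb mb \<rho>b mb'" and "word Nb \<rho>b = word Na (List.map_filter fst \<rho>)"
  shows "\<exists>\<rho>'. fires (sync Nb M) (msync Nb mb m) \<rho>' (munion (places Nb) mb' mM')
    \<and> word (sync Na M) \<rho> = word (sync Nb M) \<rho>'"
proof -
  obtain \<rho>' where \<rho>': "set \<rho>' \<subseteq> trans (sync Nb M)" "List.map_filter fst \<rho>' = \<rho>b"
      "List.map_filter snd \<rho>' = List.map_filter snd \<rho>" "word (sync Nb M) \<rho>' = word (sync Na M) \<rho>"
    using sync_run_transfer_left[OF assms(2,4) fires_trans[OF assms(6)] assms(7)] by blast
  have "fires (sync Nb M) (msync Nb mb m) \<rho>' (munion (places Nb) mb' mM')"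
    using fires_sync_iff[OF assms(1,3) \<rho>'(1)] \<rho>'(2,3) assms(5,6) unfolding msync_def by auto
  with \<rho>'(4) show ?thesis
    by auto
qed

lemma abstraction_sync:
  assumes wf: "wf_net M" and alph: "alph Na = alph Nb" and m: "marking_on (places M) m"
    and abs: "abstraction Na ma E Nb mb"
    and Na: "places Na \<inter> places M = {}" and Nb: "places Nb \<inter> places M = {}"
    and E: "fvars E \<inter> places M = {}"
  shows "abstraction (sync Na M) (msync Na ma m) E (sync Nb M) (msync Nb mb m)"
  unfolding abstraction_def
proof (intro conjI allI impI)
  show "usat (places (sync Na M)) (msync Na ma m) (places (sync Nb M)) (msync Nb mb m) E"
    using usat_munion_extend[OF _ Na Nb E] abs unfolding abstraction_def msync_def by simp
next
  fix \<rho> m1'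
  assume run: "fires (sync Na M) (msync Na ma m) \<rho> m1'"
  then obtain ma' mM' where runa: "fires Na ma (List.map_filter fst \<rho>) ma'"
    and runM: "fires M m (List.map_filter snd \<rho>) mM'" and m1': "m1' = munion (places Na) ma' mM'"
    using fires_sync_iff[OF wf Na fires_trans[OF run]] unfolding msync_def by blast
  have mM': "marking_on (places M) mM'"
    using fires_marking_on[OF wf m runM] .
  from abs runa obtain mb' where mb': "marking_on (places Nb) mb'" "usat (places Na) ma' (places Nb) mb' E"
    unfolding abstraction_def by blast
  then show "\<exists>m2'. marking_on (places (sync Nb M)) m2'
      \<and> usat (places (sync Na M)) m1' (places (sync Nb M)) m2' E"
    using marking_on_munion[OF mb'(1) mM'] usat_munion_extend[OF mb'(2) Na Nb E] m1' by auto
  fix m2'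
  assume "marking_on (places (sync Nb M)) m2' \<and> usat (places (sync Na M)) m1' (places (sync Nb M)) m2' E"
  then obtain mb' where "marking_on (places Nb) mb'" and "usat (places Na) ma' (places Nb) mb' E"
    and m2': "m2' = munion (places Nb) mb' mM'"
    using usat_munion_splitE[of "places Na" "places M" ma' mM' "places Nb" m2' E] mM' Na m1' by auto
  with abs runa obtain \<rho>b where runb: "fires Nb mb \<rho>b mb'"
    and w: "word Na (List.map_filter fst \<rho>) = word Nb \<rho>b"
    unfolding abstraction_def by blast
  from fires_sync_replace_left[OF wf alph Nb fires_trans[OF run] runM runb w[symmetric]] m2'
  show "\<exists>\<rho>2. fires (sync Nb M) (msync Nb mb m) \<rho>2 m2' \<and> word (sync Na M) \<rho> = word (sync Nb M) \<rho>2"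
    by simp
qed

theorem theorem2:
  fixes N1 :: "('v, 't1, 'a) pnet" and N2 :: "('v, 't2, 'a) pnet" and M :: "('v, 't3, 'a) pnet"
    and m1 m2 m :: "'v \<Rightarrow> nat" and E :: "'v formula"
  assumes "wf_net N1" and "wf_net N2" and "wf_net M"
    and "alph N1 = alph N2"
    and "marking_on (places N1) m1" and "marking_on (places N2) m2" and "marking_on (places M) m"
    and "equivalence N1 m1 E N2 m2"
    and "compatible_net N1 N2 E M"
  shows "equivalence (sync N1 M) (msync N1 m1 m) E (sync N2 M) (msync N2 m2 m)"
proof -
  have N1: "places N1 \<inter> places M = {}" and N2: "places N2 \<inter> places M = {}"
    and E: "fvars E \<inter> places M = {}"
    using assms(9) unfolding compatible_net_def fresh_vars_def by auto
  from assms(8) have "abstraction N1 m1 E N2 m2" and "abstraction N2 m2 E N1 m1"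
    unfolding equivalence_def by auto
  then show ?thesis
    unfolding equivalence_def
    using abstraction_sync[OF assms(3,4,7) _ N1 N2 E]
      abstraction_sync[OF assms(3) assms(4)[symmetric] assms(7) _ N2 N1 E]
    by blast
qed

end
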